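(* Let $R$ be a local ring with maximal ideal $\mathcal{M}$ such that $\mathcal{M}$ is finitely generated both as a left ideal and as a right ideal, and $\mathcal{M}^k=(0)$ for some $k\in\mathbb{N}$. If every left $R$-module generated by two elements is a direct sum of cyclic modules, then either $R$ is a left Artinian principal left ideal ring or $R$ is a right Artinian principal right ideal ring.
   Context: All rings have identity and modules are unital. A ring $R$ is local if it has a unique maximal left ideal $\mathcal{M}$. *)

theory Defs
  imports "HOL-Algebra.Algebra"
begin

definition left_ideal :: "('a, 'b) ring_scheme \<Rightarrow> 'a set \<Rightarrow> bool" where
  "left_ideal R I \<longleftrightarrow> additive_subgroup I R \<and>
     (\<forall>r\<in>carrier R. \<forall>x\<in>I. r \<otimes>\<^bsub>R\<^esub> x \<in> I)"

definition right_ideal :: "('a, 'b) ring_scheme \<Rightarrow> 'a set \<Rightarrow> bool" where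
  "right_ideal R I \<longleftrightarrow> additive_subgroup I R \<and>
     (\<forall>r\<in>carrier R. \<forall>x\<in>I. x \<otimes>\<^bsub>R\<^esub> r \<in> I)"

definition maximal_left_ideal :: "('a, 'b) ring_scheme \<Rightarrow> 'a set \<Rightarrow> bool" where
  "maximal_left_ideal R I \<longleftrightarrow> left_ideal R I \<and> I \<noteq> carrier R \<and>
     (\<forall>J. left_ideal R J \<and> I \<subseteq> J \<and> J \<noteq> carrier R \<longrightarrow> J = I)"

definition local_ring :: "('a, 'b) ring_scheme \<Rightarrow> bool" where
  "local_ring R \<longleftrightarrow> ring R \<and> (\<exists>!I. maximal_left_ideal R I)"

definition fg_left_ideal :: "('a, 'b) ring_scheme \<Rightarrow> 'a set \<Rightarrow> bool" where
  "fg_left_ideal R I \<longleftrightarrow> (\<exists>S. finite S \<and> S \<subseteq> carrier R \<and>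
     I = {finsum R (\<lambda>s. c s \<otimes>\<^bsub>R\<^esub> s) S | c. c \<in> S \<rightarrow> carrier R})"

definition fg_right_ideal :: "('a, 'b) ring_scheme \<Rightarrow> 'a set \<Rightarrow> bool" where
  "fg_right_ideal R I \<longleftrightarrow> (\<exists>S. finite S \<and> S \<subseteq> carrier R \<and>
     I = {finsum R (\<lambda>s. s \<otimes>\<^bsub>R\<^esub> c s) S | c. c \<in> S \<rightarrow> carrier R})"

(* I^k = (0): every product of k elements of I is zero (I^k is the additive span of these) *)
definition ideal_power_zero :: "('a, 'b) ring_scheme \<Rightarrow> 'a set \<Rightarrow> nat \<Rightarrow> bool" where
  "ideal_power_zero R I k \<longleftrightarrow> (\<forall>xs. length xs = k \<and> set xs \<subseteq> I \<longrightarrow>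
     foldr (\<lambda>x y. x \<otimes>\<^bsub>R\<^esub> y) xs \<one>\<^bsub>R\<^esub> = \<zero>\<^bsub>R\<^esub>)"

definition left_artinian :: "('a, 'b) ring_scheme \<Rightarrow> bool" where
  "left_artinian R \<longleftrightarrow> (\<forall>f :: nat \<Rightarrow> 'a set.
     (\<forall>n. left_ideal R (f n)) \<and> (\<forall>n. f (Suc n) \<subseteq> f n) \<longrightarrow> (\<exists>N. \<forall>n\<ge>N. f n = f N))"

definition right_artinian :: "('a, 'b) ring_scheme \<Rightarrow> bool" where
  "right_artinian R \<longleftrightarrow> (\<forall>f :: nat \<Rightarrow> 'a set.
     (\<forall>n. right_ideal R (f n)) \<and> (\<forall>n. f (Suc n) \<subseteq> f n) \<longrightarrow> (\<exists>N. \<forall>n\<ge>N. f n = f N))"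

definition principal_left_ideal_ring :: "('a, 'b) ring_scheme \<Rightarrow> bool" where
  "principal_left_ideal_ring R \<longleftrightarrow> (\<forall>I. left_ideal R I \<longrightarrow>
     (\<exists>a\<in>carrier R. I = {r \<otimes>\<^bsub>R\<^esub> a | r. r \<in> carrier R}))"

definition principal_right_ideal_ring :: "('a, 'b) ring_scheme \<Rightarrow> bool" where
  "principal_right_ideal_ring R \<longleftrightarrow> (\<forall>I. right_ideal R I \<longrightarrow>
     (\<exists>a\<in>carrier R. I = {a \<otimes>\<^bsub>R\<^esub> r | r. r \<in> carrier R}))"

definition left_module :: "('a, 'c) ring_scheme \<Rightarrow> ('a, 'b) module \<Rightarrow> bool" where
  "left_module R M \<longleftrightarrow> ring R \<and> abelian_group M \<and>
     (\<forall>r\<in>carrier R. \<forall>m\<in>carrier M. smult M r m \<in> carrier M) \<and>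
     (\<forall>r\<in>carrier R. \<forall>m\<in>carrier M. \<forall>n\<in>carrier M.
        smult M r (m \<oplus>\<^bsub>M\<^esub> n) = smult M r m \<oplus>\<^bsub>M\<^esub> smult M r n) \<and>
     (\<forall>r\<in>carrier R. \<forall>s\<in>carrier R. \<forall>m\<in>carrier M.
        smult M (r \<oplus>\<^bsub>R\<^esub> s) m = smult M r m \<oplus>\<^bsub>M\<^esub> smult M s m) \<and>
     (\<forall>r\<in>carrier R. \<forall>s\<in>carrier R. \<forall>m\<in>carrier M.
        smult M (r \<otimes>\<^bsub>R\<^esub> s) m = smult M r (smult M s m)) \<and>
     (\<forall>m\<in>carrier M. smult M \<one>\<^bsub>R\<^esub> m = m)"

definition generated_by_two :: "('a, 'c) ring_scheme \<Rightarrow> ('a, 'b) module \<Rightarrow> bool" where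
  "generated_by_two R M \<longleftrightarrow> (\<exists>x\<in>carrier M. \<exists>y\<in>carrier M.
     carrier M = {smult M r x \<oplus>\<^bsub>M\<^esub> smult M s y | r s. r \<in> carrier R \<and> s \<in> carrier R})"

definition direct_sum_of_cyclics :: "('a, 'c) ring_scheme \<Rightarrow> ('a, 'b) module \<Rightarrow> bool" where
  "direct_sum_of_cyclics R M \<longleftrightarrow> (\<exists>xs. set xs \<subseteq> carrier M \<and>
     (\<forall>m\<in>carrier M. \<exists>c\<in>{..<length xs} \<rightarrow> carrier R.
        m = finsum M (\<lambda>i. smult M (c i) (xs ! i)) {..<length xs}) \<and>
     (\<forall>c\<in>{..<length xs} \<rightarrow> carrier R.
        finsum M (\<lambda>i. smult M (c i) (xs ! i)) {..<length xs} = \<zero>\<^bsub>M\<^esub> \<longrightarrow>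
        (\<forall>i<length xs. smult M (c i) (xs ! i) = \<zero>\<^bsub>M\<^esub>)))"

end

theory Submission
  imports Defs
begin

text \<open>
  A nilpotent maximal left ideal \<open>M\<close> consists exactly of the non-units (\<open>\<one> - m\<close> is invertible
  for nilpotent \<open>m\<close>), so it is two-sided and \<open>R\<close> is local. If \<open>M \<noteq> 0\<close>, nilpotency provides \<open>a \<in> M\<close> that is not a
  product of two elements of \<open>M\<close>. For \<open>b \<in> M\<close> the two-generated module \<open>R\<^sup>2 / R(a, b)\<close>
  is a direct sum of cyclic modules \<open>R x\<^sub>i\<close>, \<open>x\<^sub>i = [(\<alpha>\<^sub>i, \<beta>\<^sub>i)]\<close>. Lifting \<open>(1, 0)\<close> and
  \<open>(0, 1)\<close> writes \<open>(a, b) = \<Sum> p\<^sub>i (\<alpha>\<^sub>i, \<beta>\<^sub>i)\<close> with \<open>p\<^sub>i \<in> M\<close>; independence of the summands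
  gives \<open>p\<^sub>i (\<alpha>\<^sub>i, \<beta>\<^sub>i) = \<lambda>\<^sub>i (a, b)\<close>, and \<open>\<Sum> \<lambda>\<^sub>i a = a\<close> makes some \<open>\<lambda>\<^sub>i\<close> a unit. Then
  \<open>a = \<nu> \<alpha>\<^sub>i\<close> and \<open>b = \<nu> \<beta>\<^sub>i\<close> with \<open>\<nu> \<in> M\<close>, so \<open>\<alpha>\<^sub>i\<close> is a unit and \<open>b \<in> a R\<close>. Hence
  \<open>M = a R\<close>, every right ideal is some \<open>a\<^sup>j R\<close> with \<open>j \<le> k\<close>, and \<open>R\<close> is a right Artinian
  principal right ideal ring.
\<close>

(* ring_simprules, the rule set of the algebra method, lacks r_one; without it x \<otimes> \<one> is not
   normalised in non-commutative rings. *)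
lemmas (in ring) ring_simprules_r_one
  [algebra ring "ring.zero R" "ring.add R" "a_inv R" "a_minus R" "monoid.one R" "monoid.mult R"] =
  ring_simprules r_one

lemma (in monoid) foldr_mult_replicate:
  "x \<in> carrier G \<Longrightarrow> foldr (\<otimes>) (replicate n x) \<one> = x [^] (n::nat)"
  by (induction n) (simp_all add: nat_pow_Suc2[symmetric] del: foldr_replicate)

lemma (in monoid) foldr_mult_closed:
  "set xs \<subseteq> carrier G \<Longrightarrow> foldr (\<otimes>) xs \<one> \<in> carrier G"
  by (induction xs) auto

lemma (in monoid) Units_inv_mult_cancel_left:
  "u \<in> Units G \<Longrightarrow> x \<in> carrier G \<Longrightarrow> inv u \<otimes> (u \<otimes> x) = x"
  by (simp add: m_assoc[symmetric] Units_closed)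

lemma (in monoid) Units_mult_inv_cancel_left:
  "u \<in> Units G \<Longrightarrow> x \<in> carrier G \<Longrightarrow> u \<otimes> (inv u \<otimes> x) = x"
  by (simp add: m_assoc[symmetric] Units_closed)

lemma (in ring) geometric_sum_mult:
  assumes m: "m \<in> carrier R"
  shows "(\<Oplus>i\<in>{..<n}. m [^] i) \<otimes> (\<one> \<ominus> m) = \<one> \<ominus> m [^] (n::nat)"
proof (induction n)
  case 0
  then show ?case using m by (simp add: r_neg minus_eq)
next
  case (Suc n)
  have S: "(\<Oplus>i\<in>{..<n}. m [^] i) \<in> carrier R" "m [^] n \<in> carrier R"
    using m by (auto intro: finsum_closed)
  have "(\<Oplus>i\<in>{..<Suc n}. m [^] i) \<otimes> (\<one> \<ominus> m)
      = m [^] n \<otimes> (\<one> \<ominus> m) \<oplus> (\<Oplus>i\<in>{..<n}. m [^] i) \<otimes> (\<one> \<ominus> m)"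
    using m S by (simp add: lessThan_Suc finsum_insert l_distr)
  also have "\<dots> = m [^] n \<otimes> (\<one> \<ominus> m) \<oplus> (\<one> \<ominus> m [^] n)"
    using Suc.IH by simp
  also have "\<dots> = \<one> \<ominus> m [^] n \<otimes> m"
    using m S by algebra
  finally show ?case by simp
qed

lemma (in ring) nilpotent_one_minus_left_invertible:
  assumes m: "m \<in> carrier R" and nil: "m [^] (n::nat) = \<zero>"
  shows "\<exists>s\<in>carrier R. s \<otimes> (\<one> \<ominus> m) = \<one>"
  using geometric_sum_mult[OF m, of n] nil m by (auto intro!: finsum_closed simp: minus_eq)

lemma (in ring) finsum_mult_combination:
  assumes "finite I" "c \<in> I \<rightarrow> carrier R" "d \<in> I \<rightarrow> carrier R" "\<gamma> \<in> I \<rightarrow> carrier R"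
    and "x \<in> carrier R" "y \<in> carrier R" "z \<in> carrier R"
  shows "(\<Oplus>i\<in>I. (z \<otimes> (x \<otimes> c i \<oplus> y \<otimes> d i)) \<otimes> \<gamma> i)
    = z \<otimes> (x \<otimes> (\<Oplus>i\<in>I. c i \<otimes> \<gamma> i) \<oplus> y \<otimes> (\<Oplus>i\<in>I. d i \<otimes> \<gamma> i))"
proof -
  have "(\<Oplus>i\<in>I. (z \<otimes> (x \<otimes> c i \<oplus> y \<otimes> d i)) \<otimes> \<gamma> i)
      = (\<Oplus>i\<in>I. z \<otimes> (x \<otimes> (c i \<otimes> \<gamma> i) \<oplus> y \<otimes> (d i \<otimes> \<gamma> i)))"
  proof (rule finsum_cong')
    fix i assume "i \<in> I"
    then have "c i \<in> carrier R" "d i \<in> carrier R" "\<gamma> i \<in> carrier R"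
      using assms by auto
    then show "(z \<otimes> (x \<otimes> c i \<oplus> y \<otimes> d i)) \<otimes> \<gamma> i
        = z \<otimes> (x \<otimes> (c i \<otimes> \<gamma> i) \<oplus> y \<otimes> (d i \<otimes> \<gamma> i))"
      using assms by algebra
  qed (use assms in \<open>auto simp: Pi_iff\<close>)
  also have "\<dots> = z \<otimes> (\<Oplus>i\<in>I. x \<otimes> (c i \<otimes> \<gamma> i) \<oplus> y \<otimes> (d i \<otimes> \<gamma> i))"
    using assms by (intro finsum_rdistr[symmetric]) (auto simp: Pi_iff)
  also have "(\<Oplus>i\<in>I. x \<otimes> (c i \<otimes> \<gamma> i) \<oplus> y \<otimes> (d i \<otimes> \<gamma> i))
      = (\<Oplus>i\<in>I. x \<otimes> (c i \<otimes> \<gamma> i)) \<oplus> (\<Oplus>i\<in>I. y \<otimes> (d i \<otimes> \<gamma> i))"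
    using assms by (intro finsum_addf) (auto simp: Pi_iff)
  also have "(\<Oplus>i\<in>I. x \<otimes> (c i \<otimes> \<gamma> i)) = x \<otimes> (\<Oplus>i\<in>I. c i \<otimes> \<gamma> i)"
    using assms by (intro finsum_rdistr[symmetric]) (auto simp: Pi_iff)
  also have "(\<Oplus>i\<in>I. y \<otimes> (d i \<otimes> \<gamma> i)) = y \<otimes> (\<Oplus>i\<in>I. d i \<otimes> \<gamma> i)"
    using assms by (intro finsum_rdistr[symmetric]) (auto simp: Pi_iff)
  finally show ?thesis .
qed

text \<open>Since \<open>(a, b) = a (1, 0) + b (0, 1)\<close>, combining lifts \<open>(A1, B1)\<close> of \<open>(1, 0)\<close> and
  \<open>(A2, B2)\<close> of \<open>(0, 1)\<close> modulo \<open>R(a, b)\<close> with coefficients \<open>a, b\<close> returns \<open>(a, b)\<close> up to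
  the left factor \<open>\<one> - (a t1 + b t2)\<close>.\<close>

lemma (in ring) lift_combination_identity:
  assumes carrier: "a \<in> carrier R" "b \<in> carrier R" "t1 \<in> carrier R" "t2 \<in> carrier R"
      "A1 \<in> carrier R" "B1 \<in> carrier R" "A2 \<in> carrier R" "B2 \<in> carrier R"
    and lift1: "\<one> \<ominus> A1 = t1 \<otimes> a" "\<zero> \<ominus> B1 = t1 \<otimes> b"
    and lift2: "\<zero> \<ominus> A2 = t2 \<otimes> a" "\<one> \<ominus> B2 = t2 \<otimes> b"
  shows "a \<otimes> A1 \<oplus> b \<otimes> A2 = (\<one> \<ominus> (a \<otimes> t1 \<oplus> b \<otimes> t2)) \<otimes> a"
    and "a \<otimes> B1 \<oplus> b \<otimes> B2 = (\<one> \<ominus> (a \<otimes> t1 \<oplus> b \<otimes> t2)) \<otimes> b"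
proof -
  have "A1 = \<one> \<ominus> (\<one> \<ominus> A1)" "B1 = \<zero> \<ominus> (\<zero> \<ominus> B1)"
      "A2 = \<zero> \<ominus> (\<zero> \<ominus> A2)" "B2 = \<one> \<ominus> (\<one> \<ominus> B2)"
    using carrier by algebra+
  then have "A1 = \<one> \<ominus> t1 \<otimes> a" "B1 = \<zero> \<ominus> t1 \<otimes> b"
      "A2 = \<zero> \<ominus> t2 \<otimes> a" "B2 = \<one> \<ominus> t2 \<otimes> b"
    using lift1 lift2 by simp_all
  then show "a \<otimes> A1 \<oplus> b \<otimes> A2 = (\<one> \<ominus> (a \<otimes> t1 \<oplus> b \<otimes> t2)) \<otimes> a"
    and "a \<otimes> B1 \<oplus> b \<otimes> B2 = (\<one> \<ominus> (a \<otimes> t1 \<oplus> b \<otimes> t2)) \<otimes> b"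
    using carrier by algebra+
qed

lemma (in ring) right_ideal_unit_factor:
  assumes "right_ideal R I" "x \<in> carrier R" "u \<in> Units R" "x \<otimes> u \<in> I"
  shows "x \<in> I"
proof -
  have "(x \<otimes> u) \<otimes> inv u \<in> I"
    using assms by (simp add: right_ideal_def)
  moreover have "(x \<otimes> u) \<otimes> inv u = x"
    using assms by (simp add: m_assoc Units_closed)
  ultimately show ?thesis
    by simp
qed

lemma right_artinian_if_finitely_many_right_ideals:
  assumes "finite {I. right_ideal R I}"
  shows "right_artinian R"
  unfolding right_artinian_def
proof (intro allI impI)
  fix f :: "nat \<Rightarrow> 'a set"
  assume f: "(\<forall>n. right_ideal R (f n)) \<and> (\<forall>n. f (Suc n) \<subseteq> f n)"
  then have "range f \<subseteq> {I. right_ideal R I}" by auto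
  then have "finite (range f)"
    using assms by (rule finite_subset)
  then obtain N where N: "\<forall>J\<in>range f. J \<subseteq> f N \<longrightarrow> f N = J"
    using finite_has_minimal2[of "range f" "f 0"] by blast
  have "f n = f N" if "n \<ge> N" for n
    using N lift_Suc_antimono_le[of f] f that by blast
  then show "\<exists>N. \<forall>n\<ge>N. f n = f N" by blast
qed

section \<open>Rings with a nilpotent maximal left ideal\<close>

locale nilpotent_maximal_left_ideal = ring R for R (structure) +
  fixes M :: "'a set" and k :: nat
  assumes maximal: "maximal_left_ideal R M"
    and nilpotent: "ideal_power_zero R M k"

sublocale nilpotent_maximal_left_ideal \<subseteq> M: additive_subgroup M R
  using maximal by (simp add: maximal_left_ideal_def left_ideal_def)

context nilpotent_maximal_left_ideal
begin

abbreviation M_products :: "'a set" where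
  "M_products \<equiv> {\<nu> \<otimes> \<mu> | \<nu> \<mu>. \<nu> \<in> M \<and> \<mu> \<in> M}"

lemma M_closed: "x \<in> M \<Longrightarrow> x \<in> carrier R"
  using M.a_subset by blast

lemma M_left_mult: "r \<in> carrier R \<Longrightarrow> x \<in> M \<Longrightarrow> r \<otimes> x \<in> M"
  using maximal by (simp add: maximal_left_ideal_def left_ideal_def)

lemma M_finsum: "finite I \<Longrightarrow> \<forall>i\<in>I. g i \<in> M \<Longrightarrow> finsum R g I \<in> M"
proof (induction I rule: finite_induct)
  case (insert i I)
  then show ?case
    using M_closed by (simp add: finsum_insert Pi_iff M.a_closed)
qed simp

lemma one_notin_M: "\<one> \<notin> M"
proof
  assume "\<one> \<in> M"
  then have "carrier R \<subseteq> M"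
    using M_left_mult[of _ \<one>] by (metis r_one subsetI)
  then show False
    using maximal M.a_subset by (auto simp: maximal_left_ideal_def)
qed

lemma nilpotent_pow:
  assumes x: "x \<in> M" and n: "n \<ge> k"
  shows "x [^] (n::nat) = \<zero>"
proof -
  have "length (replicate k x) = k \<and> set (replicate k x) \<subseteq> M"
    using x by (auto simp: in_set_replicate)
  then have "foldr (\<otimes>) (replicate k x) \<one> = \<zero>"
    using nilpotent unfolding ideal_power_zero_def by blast
  then have "x [^] k = \<zero>"
    using x by (simp add: M_closed foldr_mult_replicate del: foldr_replicate)
  moreover have "x [^] n = x [^] k \<otimes> x [^] (n - k)"
    using n x by (simp add: M_closed nat_pow_mult)
  ultimately show ?thesis
    using x by (simp add: M_closed)
qed

lemma left_ideal_left_multiples_add_M: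
  assumes x: "x \<in> carrier R"
  shows "left_ideal R {r \<otimes> x \<oplus> m | r m. r \<in> carrier R \<and> m \<in> M}"
    (is "left_ideal R ?J")
  unfolding left_ideal_def
proof
  show "additive_subgroup ?J R"
  proof (rule additive_subgroupI, rule subgroup.intro)
    show "?J \<subseteq> carrier (add_monoid R)"
      using x M_closed by auto
    have "\<zero> = \<zero> \<otimes> x \<oplus> \<zero>"
      using x by simp
    then show "\<one>\<^bsub>add_monoid R\<^esub> \<in> ?J"
      by simp (metis zero_closed M.zero_closed)
  next
    fix u v assume "u \<in> ?J" "v \<in> ?J"
    then obtain r m r' m' where u: "u = r \<otimes> x \<oplus> m" "r \<in> carrier R" "m \<in> M"
      and v: "v = r' \<otimes> x \<oplus> m'" "r' \<in> carrier R" "m' \<in> M"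
      by auto
    have "u \<oplus> v = (r \<oplus> r') \<otimes> x \<oplus> (m \<oplus> m')"
      unfolding u(1) v(1) using u v x M_closed[OF u(3)] M_closed[OF v(3)] by algebra
    then show "u \<otimes>\<^bsub>add_monoid R\<^esub> v \<in> ?J"
      using u v M.a_closed by auto
    have "\<ominus> u = (\<ominus> r) \<otimes> x \<oplus> (\<ominus> m)"
      unfolding u(1) using u x M_closed[OF u(3)] by algebra
    then show "inv\<^bsub>add_monoid R\<^esub> u \<in> ?J"
      unfolding a_inv_def[symmetric] using u M.a_inv_closed by auto
  qed
  show "\<forall>r\<in>carrier R. \<forall>y\<in>?J. r \<otimes> y \<in> ?J"
  proof (intro ballI)
    fix r y assume r: "r \<in> carrier R" and "y \<in> ?J"
    then obtain s m where y: "y = s \<otimes> x \<oplus> m" "s \<in> carrier R" "m \<in> M"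
      by auto
    then have "r \<otimes> y = (r \<otimes> s) \<otimes> x \<oplus> r \<otimes> m"
      unfolding y(1) using y x M_closed[OF y(3)] r by algebra
    then show "r \<otimes> y \<in> ?J"
      using y M_left_mult r by auto
  qed
qed

lemma one_in_left_span:
  assumes x: "x \<in> carrier R" "x \<notin> M"
  shows "\<exists>r\<in>carrier R. \<exists>m\<in>M. \<one> = r \<otimes> x \<oplus> m"
proof -
  define J where "J = {r \<otimes> x \<oplus> m | r m. r \<in> carrier R \<and> m \<in> M}"
  have "M \<subseteq> J"
  proof
    fix m assume "m \<in> M"
    then have "m = \<zero> \<otimes> x \<oplus> m"
      using x M_closed by simp
    then show "m \<in> J"
      unfolding J_def using \<open>m \<in> M\<close> by blast
  qed
  moreover have "x = \<one> \<otimes> x \<oplus> \<zero>"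
    using x by simp
  then have "x \<in> J"
    unfolding J_def using M.zero_closed by blast
  ultimately have "J = carrier R"
    using maximal x left_ideal_left_multiples_add_M
    unfolding maximal_left_ideal_def J_def by blast
  then show ?thesis
    unfolding J_def by blast
qed

lemma left_invertible_notin_M:
  assumes x: "x \<in> carrier R" "x \<notin> M"
  shows "\<exists>s\<in>carrier R. s \<otimes> x = \<one>"
proof -
  obtain r m where rm: "r \<in> carrier R" "m \<in> M" "\<one> = r \<otimes> x \<oplus> m"
    using one_in_left_span[OF x] by blast
  obtain g where g: "g \<in> carrier R" "g \<otimes> (\<one> \<ominus> m) = \<one>"
    using nilpotent_one_minus_left_invertible[OF M_closed[OF rm(2)]]
      nilpotent_pow[OF rm(2) order.refl] by blast
  have "\<one> \<ominus> m = r \<otimes> x"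
    using rm x M_closed by (simp add: minus_eq a_assoc r_neg)
  then have "(g \<otimes> r) \<otimes> x = \<one>"
    using g rm x by (simp add: m_assoc)
  then show ?thesis
    using g rm by blast
qed

text \<open>If \<open>m r \<notin> M\<close>, a left inverse \<open>s\<close> of \<open>m r\<close> gives \<open>z = r s m \<in> M\<close> with \<open>z r = r\<close>,
  so \<open>r = z\<^sup>k r = \<zero>\<close>.\<close>

lemma M_right_mult:
  assumes m: "m \<in> M" and r: "r \<in> carrier R"
  shows "m \<otimes> r \<in> M"
proof (rule ccontr)
  assume mr: "m \<otimes> r \<notin> M"
  obtain s where s: "s \<in> carrier R" "s \<otimes> (m \<otimes> r) = \<one>"
    using left_invertible_notin_M[OF _ mr] M_closed[OF m] r by auto
  define z where "z = r \<otimes> s \<otimes> m"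
  have z: "z \<in> M"
    unfolding z_def using M_left_mult m r s by simp
  have "z \<otimes> r = r"
    unfolding z_def using s M_closed[OF m] r by (simp add: m_assoc)
  then have "z [^] n \<otimes> r = r" for n :: nat
    using M_closed[OF z] r by (induction n) (simp_all add: m_assoc)
  then have "r = z [^] k \<otimes> r" ..
  then have "r = \<zero>"
    using nilpotent_pow[OF z order.refl] r by simp
  then show False
    using mr M_closed[OF m] M.zero_closed by simp
qed

lemma notin_M_Units:
  assumes x: "x \<in> carrier R" "x \<notin> M"
  shows "x \<in> Units R"
proof -
  obtain s where s: "s \<in> carrier R" "s \<otimes> x = \<one>"
    using left_invertible_notin_M[OF x] by blast
  have "s \<notin> M"
    using M_right_mult[of s x] s x one_notin_M by auto
  then obtain t where t: "t \<in> carrier R" "t \<otimes> s = \<one>"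
    using left_invertible_notin_M s by blast
  have "x = t"
    using m_assoc[OF t(1) s(1) x(1)] s t x by simp
  then show ?thesis
    using s t x unfolding Units_def by auto
qed

lemma one_minus_M_Units:
  assumes "m \<in> M"
  shows "\<one> \<ominus> m \<in> Units R"
proof (rule notin_M_Units)
  show "\<one> \<ominus> m \<in> carrier R"
    using assms M_closed by simp
  show "\<one> \<ominus> m \<notin> M"
  proof
    assume "\<one> \<ominus> m \<in> M"
    then have "(\<one> \<ominus> m) \<oplus> m \<in> M"
      using assms M.a_closed by blast
    then show False
      using assms M_closed one_notin_M by (simp add: minus_eq a_assoc l_neg)
  qed
qed

lemma exists_coeff_notin_M:
  assumes "finite I" "l \<in> I \<rightarrow> carrier R" "x \<in> carrier R" "x \<noteq> \<zero>"
    and "(\<Oplus>i\<in>I. l i \<otimes> x) = x"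
  shows "\<exists>i\<in>I. l i \<notin> M"
proof (rule ccontr)
  assume "\<not> (\<exists>i\<in>I. l i \<notin> M)"
  then have "(\<Oplus>i\<in>I. l i) \<in> M"
    using assms(1) by (intro M_finsum) auto
  then have unit: "\<one> \<ominus> (\<Oplus>i\<in>I. l i) \<in> Units R"
    by (rule one_minus_M_Units)
  have "(\<one> \<ominus> (\<Oplus>i\<in>I. l i)) \<otimes> x = x \<ominus> (\<Oplus>i\<in>I. l i \<otimes> x)"
    using assms by (simp add: finsum_ldistr finsum_closed l_distr minus_eq l_minus)
  also have "\<dots> = \<zero>"
    using assms by (simp add: r_neg minus_eq)
  finally show False
    using unit assms(3,4) Units_l_cancel[of _ x \<zero>] by (simp add: Units_closed)
qed

lemma right_multiple_if_common_left_factor: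
  assumes not_product: "a \<notin> M_products"
    and \<nu>: "\<nu> \<in> M" and \<alpha>: "\<alpha> \<in> carrier R" and \<beta>: "\<beta> \<in> carrier R"
    and a: "\<nu> \<otimes> \<alpha> = a" and b: "\<nu> \<otimes> \<beta> = b"
  shows "\<exists>r\<in>carrier R. b = a \<otimes> r"
proof
  have "\<alpha> \<notin> M"
    using not_product \<nu> a by blast
  then have \<alpha>_unit: "\<alpha> \<in> Units R"
    using \<alpha> notin_M_Units by blast
  then show "inv \<alpha> \<otimes> \<beta> \<in> carrier R"
    using \<beta> by simp
  have "a \<otimes> (inv \<alpha> \<otimes> \<beta>) = \<nu> \<otimes> (\<alpha> \<otimes> (inv \<alpha> \<otimes> \<beta>))"
    unfolding a[symmetric] using \<alpha>_unit \<alpha> \<beta> M_closed[OF \<nu>] by (simp add: m_assoc)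
  then show "b = a \<otimes> (inv \<alpha> \<otimes> \<beta>)"
    using \<alpha>_unit \<beta> b by (simp add: Units_mult_inv_cancel_left)
qed

lemma M_eq_zero_if_products:
  assumes products: "M \<subseteq> M_products"
  shows "M = {\<zero>}"
proof -
  have products_of_length: "\<exists>xs. length xs = Suc n \<and> set xs \<subseteq> M \<and> x = foldr (\<otimes>) xs \<one>"
    if "x \<in> M" for x n
    using that
  proof (induction n arbitrary: x)
    case 0
    then show ?case
      using M_closed by (auto intro!: exI[of _ "[x]"])
  next
    case (Suc n)
    then obtain xs where xs: "length xs = Suc n" "set xs \<subseteq> M" "x = foldr (\<otimes>) xs \<one>"
      by blast
    then obtain y ys where ys: "xs = y # ys"
      by (cases xs) auto
    then obtain \<nu> \<mu> where y: "y = \<nu> \<otimes> \<mu>" "\<nu> \<in> M" "\<mu> \<in> M"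
      using xs(2) products by auto
    have "foldr (\<otimes>) ys \<one> \<in> carrier R"
      using xs(2) ys M_closed by (intro foldr_mult_closed) auto
    then have "x = foldr (\<otimes>) (\<nu> # \<mu> # ys) \<one>"
      using xs(3) ys y M_closed by (simp add: m_assoc)
    then show ?case
      using xs ys y by (intro exI[of _ "\<nu> # \<mu> # ys"]) auto
  qed
  have "k \<noteq> 0"
  proof
    assume "k = 0"
    then have "\<one> = \<zero>"
      using nilpotent by (simp add: ideal_power_zero_def)
    then show False
      using one_notin_M M.zero_closed by simp
  qed
  then obtain n where n: "k = Suc n"
    using not0_implies_Suc by blast
  have "x = \<zero>" if "x \<in> M" for x
    using products_of_length[OF that, of n] nilpotent n unfolding ideal_power_zero_def by blast
  then show ?thesis
    using M.zero_closed by blast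
qed

lemma pow_mult_unit_if_M_right_principal:
  assumes a: "a \<in> M" and M_eq: "M = {a \<otimes> r | r. r \<in> carrier R}"
    and x: "x \<in> carrier R"
  shows "x = \<zero> \<or> (\<exists>j u. u \<in> Units R \<and> x = a [^] (j::nat) \<otimes> u)"
proof -
  have "\<forall>m y. k \<le> m + d \<longrightarrow> y \<in> carrier R \<longrightarrow>
      a [^] m \<otimes> y = \<zero> \<or> (\<exists>j u. u \<in> Units R \<and> a [^] m \<otimes> y = a [^] (j::nat) \<otimes> u)" for d
  proof (induction d)
    case 0
    then show ?case
      using a M_closed nilpotent_pow by simp
  next
    case (Suc d)
    show ?case
    proof (intro allI impI)
      fix m y assume m: "k \<le> m + Suc d" and y: "y \<in> carrier R"
      show "a [^] m \<otimes> y = \<zero> \<or> (\<exists>j u. u \<in> Units R \<and> a [^] m \<otimes> y = a [^] (j::nat) \<otimes> u)"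
      proof (cases "y \<in> M")
        case True
        then obtain y' where y': "y = a \<otimes> y'" "y' \<in> carrier R"
          using M_eq by blast
        then have shift: "a [^] m \<otimes> y = a [^] Suc m \<otimes> y'"
          using a M_closed by (simp add: m_assoc)
        have "k \<le> Suc m + d"
          using m by simp
        then show ?thesis
          unfolding shift using Suc.IH y'(2) by blast
      next
        case False
        then show ?thesis
          using notin_M_Units y by blast
      qed
    qed
  qed
  then show ?thesis
    using x a M_closed by (metis l_one nat_pow_0 le_add2)
qed

lemma right_ideal_eq_pow_principal:
  assumes a: "a \<in> M" and M_eq: "M = {a \<otimes> r | r. r \<in> carrier R}"
    and I: "right_ideal R I"
  shows "\<exists>j\<le>k. I = {a [^] j \<otimes> r | r. r \<in> carrier R}"
proof -
  interpret I: additive_subgroup I R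
    using I by (simp add: right_ideal_def)
  have I_right_mult: "x \<otimes> r \<in> I" if "x \<in> I" "r \<in> carrier R" for x r
    using I that by (simp add: right_ideal_def)
  have ac: "a \<in> carrier R"
    using a M_closed by blast
  define j :: nat where "j = (LEAST j. a [^] (j::nat) \<in> I)"
  have "a [^] k \<in> I"
    using nilpotent_pow[OF a order.refl] I.zero_closed by simp
  then have j: "a [^] j \<in> I" "j \<le> k"
    unfolding j_def by (rule LeastI, rule Least_le)
  have "I \<subseteq> {a [^] j \<otimes> r | r. r \<in> carrier R}"
  proof
    fix v assume v: "v \<in> I"
    consider "v = \<zero>" | i u where "u \<in> Units R" "v = a [^] (i::nat) \<otimes> u"
      using pow_mult_unit_if_M_right_principal[OF a M_eq] v I.a_subset by blast
    then show "v \<in> {a [^] j \<otimes> r | r. r \<in> carrier R}"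
    proof cases
      case 1
      then have "v = a [^] j \<otimes> \<zero>"
        using ac by simp
      then show ?thesis
        by blast
    next
      case (2 i u)
      then have "a [^] i \<otimes> u \<in> I"
        using v by simp
      then have "a [^] i \<in> I"
        by (rule right_ideal_unit_factor[OF I nat_pow_closed[OF ac] \<open>u \<in> Units R\<close>])
      then have "j \<le> i"
        unfolding j_def by (rule Least_le)
      then have "a [^] i = a [^] j \<otimes> a [^] (i - j)"
        using ac by (simp add: nat_pow_mult)
      then have "v = a [^] j \<otimes> (a [^] (i - j) \<otimes> u)"
        using 2 ac by (simp add: m_assoc Units_closed)
      then show ?thesis
        using 2 ac by blast
    qed
  qed
  moreover have "{a [^] j \<otimes> r | r. r \<in> carrier R} \<subseteq> I"
    using I_right_mult j by auto
  ultimately show ?thesis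
    using j by blast
qed

lemma right_artinian_principal_if_M_right_principal:
  assumes a: "a \<in> M" and M_eq: "M = {a \<otimes> r | r. r \<in> carrier R}"
  shows "right_artinian R \<and> principal_right_ideal_ring R"
proof
  have "{I. right_ideal R I} \<subseteq> (\<lambda>j. {a [^] j \<otimes> r | r. r \<in> carrier R}) ` {..k}"
    using right_ideal_eq_pow_principal[OF a M_eq] by blast
  then have "finite {I. right_ideal R I}"
    by (rule finite_subset) simp
  then show "right_artinian R"
    by (rule right_artinian_if_finitely_many_right_ideals)
  show "principal_right_ideal_ring R"
    unfolding principal_right_ideal_ring_def
    using right_ideal_eq_pow_principal[OF a M_eq] a M_closed by blast
qed

end

section \<open>The quotient module \<open>R\<^sup>2 / R(a, b)\<close>\<close>

locale pair_quotient = ring R for R (structure) +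
  fixes a b
  assumes a_carrier: "a \<in> carrier R" and b_carrier: "b \<in> carrier R"
begin

definition multiple :: "'a \<Rightarrow> 'a \<Rightarrow> bool" where
  "multiple x y \<longleftrightarrow> (\<exists>t\<in>carrier R. x = t \<otimes> a \<and> y = t \<otimes> b)"

definition cong :: "'a \<times> 'a \<Rightarrow> 'a \<times> 'a \<Rightarrow> bool" where
  "cong v w \<longleftrightarrow> v \<in> carrier R \<times> carrier R \<and> w \<in> carrier R \<times> carrier R \<and>
     multiple (fst v \<ominus> fst w) (snd v \<ominus> snd w)"

text \<open>The quotient \<open>R\<^sup>2 / R(a, b)\<close> must live on the carrier type \<open>'a \<times> 'a\<close>, so every class
  is represented by a chosen element of it; the multiplicative fields of the record are dummies.\<close>

definition rep :: "'a \<times> 'a \<Rightarrow> 'a \<times> 'a" where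
  "rep v = (SOME w. cong w v)"

definition quotient_module :: "('a, 'a \<times> 'a) module" where
  "quotient_module = \<lparr>carrier = rep ` (carrier R \<times> carrier R), monoid.mult = (\<lambda>v w. v),
     monoid.one = (\<zero>, \<zero>), ring.zero = rep (\<zero>, \<zero>),
     ring.add = (\<lambda>v w. rep (fst v \<oplus> fst w, snd v \<oplus> snd w)),
     module.smult = (\<lambda>r v. rep (r \<otimes> fst v, r \<otimes> snd v))\<rparr>"

lemma multiple_zero: "multiple \<zero> \<zero>"
  unfolding multiple_def using a_carrier b_carrier by (auto intro!: bexI[of _ \<zero>])

lemma multiple_add:
  assumes "multiple x y" "multiple x' y'"
  shows "multiple (x \<oplus> x') (y \<oplus> y')"
proof -
  obtain t t' where "t \<in> carrier R" "t' \<in> carrier R"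
    "x = t \<otimes> a" "y = t \<otimes> b" "x' = t' \<otimes> a" "y' = t' \<otimes> b"
    using assms unfolding multiple_def by blast
  then show ?thesis
    unfolding multiple_def using a_carrier b_carrier
    by (auto intro!: bexI[of _ "t \<oplus> t'"] simp: l_distr)
qed

lemma multiple_left_mult:
  assumes "r \<in> carrier R" "multiple x y"
  shows "multiple (r \<otimes> x) (r \<otimes> y)"
proof -
  obtain t where "t \<in> carrier R" "x = t \<otimes> a" "y = t \<otimes> b"
    using assms(2) unfolding multiple_def by blast
  then show ?thesis
    unfolding multiple_def using assms(1) a_carrier b_carrier
    by (auto intro!: bexI[of _ "r \<otimes> t"] simp: m_assoc)
qed

lemma multiple_neg:
  assumes "multiple x y"
  shows "multiple (\<ominus> x) (\<ominus> y)"
proof -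
  obtain t where "t \<in> carrier R" "x = t \<otimes> a" "y = t \<otimes> b"
    using assms unfolding multiple_def by blast
  then show ?thesis
    unfolding multiple_def using a_carrier b_carrier
    by (auto intro!: bexI[of _ "\<ominus> t"] simp: l_minus)
qed

lemma cong_pair:
  "cong (x, y) (x', y') \<longleftrightarrow> x \<in> carrier R \<and> y \<in> carrier R \<and> x' \<in> carrier R \<and> y' \<in> carrier R \<and>
     multiple (x \<ominus> x') (y \<ominus> y')"
  by (auto simp: cong_def)

lemma cong_refl: "v \<in> carrier R \<times> carrier R \<Longrightarrow> cong v v"
  by (auto simp: cong_pair r_neg minus_eq multiple_zero)

lemma cong_sym: "cong v w \<Longrightarrow> cong w v"
proof (cases v, cases w)
  fix x y x' y' assume "cong v w" "v = (x, y)" "w = (x', y')"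
  then have "x \<in> carrier R" "y \<in> carrier R" "x' \<in> carrier R" "y' \<in> carrier R"
    "multiple (\<ominus> (x \<ominus> x')) (\<ominus> (y \<ominus> y'))"
    by (auto simp: cong_pair multiple_neg)
  moreover have "\<ominus> (x \<ominus> x') = x' \<ominus> x" "\<ominus> (y \<ominus> y') = y' \<ominus> y"
    using calculation by algebra+
  ultimately show "cong w v"
    using \<open>v = (x, y)\<close> \<open>w = (x', y')\<close> by (simp add: cong_pair)
qed

lemma cong_trans: "cong u v \<Longrightarrow> cong v w \<Longrightarrow> cong u w"
proof (cases u, cases v, cases w)
  fix x y x' y' x'' y''
  assume "cong u v" "cong v w" "u = (x, y)" "v = (x', y')" "w = (x'', y'')"
  then have c: "x \<in> carrier R" "y \<in> carrier R" "x' \<in> carrier R" "y' \<in> carrier R"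
      "x'' \<in> carrier R" "y'' \<in> carrier R"
    and "multiple ((x \<ominus> x') \<oplus> (x' \<ominus> x'')) ((y \<ominus> y') \<oplus> (y' \<ominus> y''))"
    by (auto simp: cong_pair multiple_add)
  moreover have "(x \<ominus> x') \<oplus> (x' \<ominus> x'') = x \<ominus> x''" "(y \<ominus> y') \<oplus> (y' \<ominus> y'') = y \<ominus> y''"
    using c by algebra+
  ultimately show "cong u w"
    using \<open>u = (x, y)\<close> \<open>w = (x'', y'')\<close> by (simp add: cong_pair)
qed

lemma cong_add:
  assumes "cong (x, y) (x', y')" "cong (u, v) (u', v')"
  shows "cong (x \<oplus> u, y \<oplus> v) (x' \<oplus> u', y' \<oplus> v')"
proof -
  have c: "x \<in> carrier R" "y \<in> carrier R" "x' \<in> carrier R" "y' \<in> carrier R"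
      "u \<in> carrier R" "v \<in> carrier R" "u' \<in> carrier R" "v' \<in> carrier R"
    and "multiple ((x \<ominus> x') \<oplus> (u \<ominus> u')) ((y \<ominus> y') \<oplus> (v \<ominus> v'))"
    using assms by (auto simp: cong_pair multiple_add)
  moreover have "(x \<ominus> x') \<oplus> (u \<ominus> u') = (x \<oplus> u) \<ominus> (x' \<oplus> u')"
      "(y \<ominus> y') \<oplus> (v \<ominus> v') = (y \<oplus> v) \<ominus> (y' \<oplus> v')"
    using c by algebra+
  ultimately show ?thesis
    by (simp add: cong_pair)
qed

lemma cong_smult:
  assumes "cong (x, y) (x', y')" "r \<in> carrier R"
  shows "cong (r \<otimes> x, r \<otimes> y) (r \<otimes> x', r \<otimes> y')"
proof -
  have c: "x \<in> carrier R" "y \<in> carrier R" "x' \<in> carrier R" "y' \<in> carrier R"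
    and "multiple (r \<otimes> (x \<ominus> x')) (r \<otimes> (y \<ominus> y'))"
    using assms by (auto simp: cong_pair multiple_left_mult)
  moreover have "r \<otimes> (x \<ominus> x') = r \<otimes> x \<ominus> r \<otimes> x'" "r \<otimes> (y \<ominus> y') = r \<otimes> y \<ominus> r \<otimes> y'"
    using c assms(2) by algebra+
  ultimately show ?thesis
    using assms(2) by (simp add: cong_pair)
qed

lemma rep_cong: "v \<in> carrier R \<times> carrier R \<Longrightarrow> cong (rep v) v"
  unfolding rep_def by (rule someI) (rule cong_refl)

lemma rep_closed: "v \<in> carrier R \<times> carrier R \<Longrightarrow> rep v \<in> carrier R \<times> carrier R"
  using rep_cong by (auto simp: cong_def)

lemma rep_eq_iff:
  "v \<in> carrier R \<times> carrier R \<Longrightarrow> w \<in> carrier R \<times> carrier R \<Longrightarrow> rep v = rep w \<longleftrightarrow> cong v w"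
proof
  assume "v \<in> carrier R \<times> carrier R" "w \<in> carrier R \<times> carrier R" "rep v = rep w"
  then show "cong v w"
    using rep_cong cong_sym cong_trans by metis
next
  assume "cong v w"
  then have "cong u v \<longleftrightarrow> cong u w" for u
    using cong_sym cong_trans by blast
  then show "rep v = rep w"
    unfolding rep_def by simp
qed

lemma rep_eq_zero_iff:
  "x \<in> carrier R \<Longrightarrow> y \<in> carrier R \<Longrightarrow> rep (x, y) = rep (\<zero>, \<zero>) \<longleftrightarrow> multiple x y"
  by (simp add: rep_eq_iff cong_pair minus_eq)

lemma quotient_carrier: "carrier quotient_module = rep ` (carrier R \<times> carrier R)"
  by (simp add: quotient_module_def)

lemma quotient_zero: "\<zero>\<^bsub>quotient_module\<^esub> = rep (\<zero>, \<zero>)"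
  by (simp add: quotient_module_def)

lemma quotient_add [simp]:
  "x \<in> carrier R \<Longrightarrow> y \<in> carrier R \<Longrightarrow> x' \<in> carrier R \<Longrightarrow> y' \<in> carrier R \<Longrightarrow>
    rep (x, y) \<oplus>\<^bsub>quotient_module\<^esub> rep (x', y') = rep (x \<oplus> x', y \<oplus> y')"
  using rep_cong[of "(x, y)"] rep_cong[of "(x', y')"]
    rep_closed[of "(x, y)"] rep_closed[of "(x', y')"]
  by (auto simp: quotient_module_def rep_eq_iff intro: cong_add)

lemma quotient_smult [simp]:
  "r \<in> carrier R \<Longrightarrow> x \<in> carrier R \<Longrightarrow> y \<in> carrier R \<Longrightarrow>
    smult quotient_module r (rep (x, y)) = rep (r \<otimes> x, r \<otimes> y)"
  using rep_cong[of "(x, y)"] rep_closed[of "(x, y)"]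
  by (auto simp: quotient_module_def rep_eq_iff cong_sym intro: cong_smult)

lemma rep_in_quotient [simp]:
  "x \<in> carrier R \<Longrightarrow> y \<in> carrier R \<Longrightarrow> rep (x, y) \<in> carrier quotient_module"
  by (simp add: quotient_carrier)

lemma rep_idem:
  assumes "v \<in> carrier quotient_module"
  shows "rep v = v"
proof -
  obtain w where w: "w \<in> carrier R \<times> carrier R" "v = rep w"
    using assms by (auto simp: quotient_carrier)
  then show ?thesis
    using rep_eq_iff[OF rep_closed] rep_cong by simp
qed

lemma quotient_carrierE:
  assumes "v \<in> carrier quotient_module"
  obtains x y where "x \<in> carrier R" "y \<in> carrier R" "v = rep (x, y)"
  using assms by (auto simp: quotient_carrier)

lemma quotient_abelian_group: "abelian_group quotient_module"
proof (rule abelian_groupI)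
  fix u v w
  assume "u \<in> carrier quotient_module" "v \<in> carrier quotient_module"
    "w \<in> carrier quotient_module"
  then show "u \<oplus>\<^bsub>quotient_module\<^esub> v \<in> carrier quotient_module"
    and "u \<oplus>\<^bsub>quotient_module\<^esub> v \<oplus>\<^bsub>quotient_module\<^esub> w
      = u \<oplus>\<^bsub>quotient_module\<^esub> (v \<oplus>\<^bsub>quotient_module\<^esub> w)"
    and "u \<oplus>\<^bsub>quotient_module\<^esub> v = v \<oplus>\<^bsub>quotient_module\<^esub> u"
    and "\<zero>\<^bsub>quotient_module\<^esub> \<oplus>\<^bsub>quotient_module\<^esub> u = u"
    by (auto simp: quotient_carrier quotient_zero a_ac)
next
  show "\<zero>\<^bsub>quotient_module\<^esub> \<in> carrier quotient_module"
    by (simp add: quotient_zero)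
next
  fix v assume "v \<in> carrier quotient_module"
  then obtain x y where xy: "x \<in> carrier R" "y \<in> carrier R" "v = rep (x, y)"
    by (auto simp: quotient_carrier)
  then have "rep (\<ominus> x, \<ominus> y) \<oplus>\<^bsub>quotient_module\<^esub> v = \<zero>\<^bsub>quotient_module\<^esub>"
    by (simp add: quotient_zero l_neg)
  then show "\<exists>u\<in>carrier quotient_module. u \<oplus>\<^bsub>quotient_module\<^esub> v = \<zero>\<^bsub>quotient_module\<^esub>"
    using xy by (meson a_inv_closed rep_in_quotient)
qed

lemma quotient_left_module: "left_module R quotient_module"
  unfolding left_module_def
proof (intro conjI ballI)
  show "ring R" "abelian_group quotient_module"
    by (rule ring_axioms quotient_abelian_group)+
qed (auto elim!: quotient_carrierE simp: r_distr l_distr m_assoc)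

lemma quotient_generated_by_two: "generated_by_two R quotient_module"
  unfolding generated_by_two_def
proof (intro bexI)
  have combination: "rep (x, y) = smult quotient_module x (rep (\<one>, \<zero>)) \<oplus>\<^bsub>quotient_module\<^esub>
      smult quotient_module y (rep (\<zero>, \<one>))"
    if "x \<in> carrier R" "y \<in> carrier R" for x y
    using that by simp
  show "carrier quotient_module =
      {smult quotient_module r (rep (\<one>, \<zero>)) \<oplus>\<^bsub>quotient_module\<^esub>
       smult quotient_module s (rep (\<zero>, \<one>)) | r s. r \<in> carrier R \<and> s \<in> carrier R}"
    (is "_ = ?span")
  proof
    show "carrier quotient_module \<subseteq> ?span"
    proof
      fix v assume "v \<in> carrier quotient_module"
      then obtain x y where "x \<in> carrier R" "y \<in> carrier R" "v = rep (x, y)"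
        by (rule quotient_carrierE)
      then show "v \<in> ?span"
        using combination by blast
    qed
    show "?span \<subseteq> carrier quotient_module"
      by auto
  qed
qed simp_all

lemma quotient_finsum:
  assumes "finite I" "f \<in> I \<rightarrow> carrier R" "g \<in> I \<rightarrow> carrier R"
  shows "finsum quotient_module (\<lambda>i. rep (f i, g i)) I = rep (\<Oplus>i\<in>I. f i, \<Oplus>i\<in>I. g i)"
  using assms
proof (induction I rule: finite_induct)
  case empty
  interpret Q: abelian_group quotient_module
    by (rule quotient_abelian_group)
  show ?case
    by (simp add: quotient_zero)
next
  case (insert i I)
  interpret Q: abelian_group quotient_module
    by (rule quotient_abelian_group)
  have "finsum quotient_module (\<lambda>i. rep (f i, g i)) (insert i I)
      = rep (f i, g i) \<oplus>\<^bsub>quotient_module\<^esub> finsum quotient_module (\<lambda>i. rep (f i, g i)) I"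
    using insert by (intro Q.finsum_insert) (auto simp: Pi_iff)
  also have "\<dots> = rep (f i \<oplus> (\<Oplus>i\<in>I. f i), g i \<oplus> (\<Oplus>i\<in>I. g i))"
    using insert by (simp add: finsum_closed)
  finally show ?case
    using insert by (simp add: finsum_insert)
qed

lemma quotient_linear_combination:
  assumes "finite I" "c \<in> I \<rightarrow> carrier R" "\<alpha> \<in> I \<rightarrow> carrier R" "\<beta> \<in> I \<rightarrow> carrier R"
  shows "finsum quotient_module (\<lambda>i. smult quotient_module (c i) (rep (\<alpha> i, \<beta> i))) I
    = rep (\<Oplus>i\<in>I. c i \<otimes> \<alpha> i, \<Oplus>i\<in>I. c i \<otimes> \<beta> i)"
proof -
  interpret Q: abelian_group quotient_module
    by (rule quotient_abelian_group)
  have "finsum quotient_module (\<lambda>i. smult quotient_module (c i) (rep (\<alpha> i, \<beta> i))) I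
      = finsum quotient_module (\<lambda>i. rep (c i \<otimes> \<alpha> i, c i \<otimes> \<beta> i)) I"
    using assms by (intro Q.finsum_cong') (auto simp: Pi_iff)
  also have "\<dots> = rep (\<Oplus>i\<in>I. c i \<otimes> \<alpha> i, \<Oplus>i\<in>I. c i \<otimes> \<beta> i)"
    using assms by (intro quotient_finsum) auto
  finally show ?thesis .
qed

lemma direct_sum_of_cyclics_generators:
  assumes "direct_sum_of_cyclics R quotient_module"
  obtains n \<alpha> \<beta> where "\<alpha> \<in> {..<n::nat} \<rightarrow> carrier R" "\<beta> \<in> {..<n} \<rightarrow> carrier R"
    and "\<And>v. v \<in> carrier quotient_module \<Longrightarrow> \<exists>c\<in>{..<n} \<rightarrow> carrier R.
        v = rep (\<Oplus>i\<in>{..<n}. c i \<otimes> \<alpha> i, \<Oplus>i\<in>{..<n}. c i \<otimes> \<beta> i)"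
    and "\<And>c i. c \<in> {..<n} \<rightarrow> carrier R \<Longrightarrow>
        rep (\<Oplus>i\<in>{..<n}. c i \<otimes> \<alpha> i, \<Oplus>i\<in>{..<n}. c i \<otimes> \<beta> i) = rep (\<zero>, \<zero>) \<Longrightarrow> i < n \<Longrightarrow>
        rep (c i \<otimes> \<alpha> i, c i \<otimes> \<beta> i) = rep (\<zero>, \<zero>)"
proof -
  obtain xs where xs: "set xs \<subseteq> carrier quotient_module"
    and span: "\<forall>v\<in>carrier quotient_module. \<exists>c\<in>{..<length xs} \<rightarrow> carrier R.
        v = finsum quotient_module (\<lambda>i. smult quotient_module (c i) (xs ! i)) {..<length xs}"
    and indep: "\<forall>c\<in>{..<length xs} \<rightarrow> carrier R.
        finsum quotient_module (\<lambda>i. smult quotient_module (c i) (xs ! i)) {..<length xs}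
          = \<zero>\<^bsub>quotient_module\<^esub> \<longrightarrow>
        (\<forall>i<length xs. smult quotient_module (c i) (xs ! i) = \<zero>\<^bsub>quotient_module\<^esub>)"
    using assms unfolding direct_sum_of_cyclics_def by blast
  define \<alpha> where "\<alpha> i = fst (xs ! i)" for i
  define \<beta> where "\<beta> i = snd (xs ! i)" for i
  have xs_rep: "xs ! i = rep (\<alpha> i, \<beta> i)" and \<alpha>\<beta>: "\<alpha> i \<in> carrier R" "\<beta> i \<in> carrier R"
    if "i < length xs" for i
  proof -
    have xs_i: "xs ! i \<in> carrier quotient_module"
      using xs that by auto
    then show "xs ! i = rep (\<alpha> i, \<beta> i)"
      using rep_idem[OF xs_i] by (simp add: \<alpha>_def \<beta>_def)
    have "xs ! i \<in> carrier R \<times> carrier R"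
      using xs_i by (auto elim!: quotient_carrierE intro: rep_closed)
    then show "\<alpha> i \<in> carrier R" "\<beta> i \<in> carrier R"
      by (auto simp: \<alpha>_def \<beta>_def)
  qed
  have combination:
    "finsum quotient_module (\<lambda>i. smult quotient_module (c i) (xs ! i)) {..<length xs}
      = rep (\<Oplus>i\<in>{..<length xs}. c i \<otimes> \<alpha> i, \<Oplus>i\<in>{..<length xs}. c i \<otimes> \<beta> i)"
    if c: "c \<in> {..<length xs} \<rightarrow> carrier R" for c
  proof -
    interpret Q: abelian_group quotient_module
      by (rule quotient_abelian_group)
    have "finsum quotient_module (\<lambda>i. smult quotient_module (c i) (xs ! i)) {..<length xs}
        = finsum quotient_module (\<lambda>i. smult quotient_module (c i) (rep (\<alpha> i, \<beta> i))) {..<length xs}"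
      using c xs_rep \<alpha>\<beta> by (intro Q.finsum_cong') (auto simp: Pi_iff)
    then show ?thesis
      using c \<alpha>\<beta> quotient_linear_combination[of "{..<length xs}" c \<alpha> \<beta>] by simp
  qed
  show thesis
  proof (rule that[of \<alpha> "length xs" \<beta>])
    show "\<alpha> \<in> {..<length xs} \<rightarrow> carrier R" "\<beta> \<in> {..<length xs} \<rightarrow> carrier R"
      using \<alpha>\<beta> by auto
  next
    fix v assume "v \<in> carrier quotient_module"
    then obtain c where "c \<in> {..<length xs} \<rightarrow> carrier R"
        "v = finsum quotient_module (\<lambda>i. smult quotient_module (c i) (xs ! i)) {..<length xs}"
      using span by blast
    then show "\<exists>c\<in>{..<length xs} \<rightarrow> carrier R.
        v = rep (\<Oplus>i\<in>{..<length xs}. c i \<otimes> \<alpha> i, \<Oplus>i\<in>{..<length xs}. c i \<otimes> \<beta> i)"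
      using combination by blast
  next
    fix c i assume c: "c \<in> {..<length xs} \<rightarrow> carrier R" and i: "i < length xs"
      and "rep (\<Oplus>i\<in>{..<length xs}. c i \<otimes> \<alpha> i, \<Oplus>i\<in>{..<length xs}. c i \<otimes> \<beta> i) = rep (\<zero>, \<zero>)"
    then have "smult quotient_module (c i) (xs ! i) = \<zero>\<^bsub>quotient_module\<^esub>"
      using indep combination[OF c] by (simp add: quotient_zero)
    then show "rep (c i \<otimes> \<alpha> i, c i \<otimes> \<beta> i) = rep (\<zero>, \<zero>)"
      using c i xs_rep \<alpha>\<beta> by (simp add: quotient_zero Pi_iff)
  qed
qed

lemma direct_sum_of_cyclics_presentation:
  assumes "direct_sum_of_cyclics R quotient_module"
  obtains n \<alpha> \<beta> where "\<alpha> \<in> {..<n::nat} \<rightarrow> carrier R" "\<beta> \<in> {..<n} \<rightarrow> carrier R"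
    and "\<And>x y. x \<in> carrier R \<Longrightarrow> y \<in> carrier R \<Longrightarrow> \<exists>c\<in>{..<n} \<rightarrow> carrier R.
        multiple (x \<ominus> (\<Oplus>i\<in>{..<n}. c i \<otimes> \<alpha> i)) (y \<ominus> (\<Oplus>i\<in>{..<n}. c i \<otimes> \<beta> i))"
    and "\<And>c i. c \<in> {..<n} \<rightarrow> carrier R \<Longrightarrow>
        multiple (\<Oplus>i\<in>{..<n}. c i \<otimes> \<alpha> i) (\<Oplus>i\<in>{..<n}. c i \<otimes> \<beta> i) \<Longrightarrow> i < n \<Longrightarrow>
        multiple (c i \<otimes> \<alpha> i) (c i \<otimes> \<beta> i)"
proof -
  obtain n :: nat and \<alpha> \<beta> where \<alpha>: "\<alpha> \<in> {..<n} \<rightarrow> carrier R" and \<beta>: "\<beta> \<in> {..<n} \<rightarrow> carrier R"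
    and span: "\<And>v. v \<in> carrier quotient_module \<Longrightarrow> \<exists>c\<in>{..<n} \<rightarrow> carrier R.
        v = rep (\<Oplus>i\<in>{..<n}. c i \<otimes> \<alpha> i, \<Oplus>i\<in>{..<n}. c i \<otimes> \<beta> i)"
    and indep: "\<And>c i. c \<in> {..<n} \<rightarrow> carrier R \<Longrightarrow>
        rep (\<Oplus>i\<in>{..<n}. c i \<otimes> \<alpha> i, \<Oplus>i\<in>{..<n}. c i \<otimes> \<beta> i) = rep (\<zero>, \<zero>) \<Longrightarrow> i < n \<Longrightarrow>
        rep (c i \<otimes> \<alpha> i, c i \<otimes> \<beta> i) = rep (\<zero>, \<zero>)"
    by (rule direct_sum_of_cyclics_generators[OF assms], blast)
  have sums_closed: "(\<Oplus>i\<in>{..<n}. c i \<otimes> \<alpha> i) \<in> carrier R" "(\<Oplus>i\<in>{..<n}. c i \<otimes> \<beta> i) \<in> carrier R"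
    if "c \<in> {..<n} \<rightarrow> carrier R" for c
    using that \<alpha> \<beta> by (auto intro!: finsum_closed)
  show thesis
  proof (rule that[OF \<alpha> \<beta>])
    fix x y assume xy: "x \<in> carrier R" "y \<in> carrier R"
    then obtain c where c: "c \<in> {..<n} \<rightarrow> carrier R"
        "rep (x, y) = rep (\<Oplus>i\<in>{..<n}. c i \<otimes> \<alpha> i, \<Oplus>i\<in>{..<n}. c i \<otimes> \<beta> i)"
      using span rep_in_quotient by blast
    then show "\<exists>c\<in>{..<n} \<rightarrow> carrier R.
        multiple (x \<ominus> (\<Oplus>i\<in>{..<n}. c i \<otimes> \<alpha> i)) (y \<ominus> (\<Oplus>i\<in>{..<n}. c i \<otimes> \<beta> i))"
      using xy sums_closed[OF c(1)] by (auto simp: rep_eq_iff cong_pair)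
  next
    fix c i assume c: "c \<in> {..<n} \<rightarrow> carrier R" and i: "i < n"
      and "multiple (\<Oplus>i\<in>{..<n}. c i \<otimes> \<alpha> i) (\<Oplus>i\<in>{..<n}. c i \<otimes> \<beta> i)"
    then have "rep (c i \<otimes> \<alpha> i, c i \<otimes> \<beta> i) = rep (\<zero>, \<zero>)"
      using indep sums_closed[OF c] by (simp add: rep_eq_zero_iff)
    then show "multiple (c i \<otimes> \<alpha> i) (c i \<otimes> \<beta> i)"
      using c i \<alpha> \<beta> by (simp add: rep_eq_zero_iff Pi_iff)
  qed
qed

end

section \<open>Two-generated modules force \<open>M\<close> to be right principal\<close>

locale pair_in_M = nilpotent_maximal_left_ideal +
  fixes a b
  assumes a_in_M: "a \<in> M" and b_in_M: "b \<in> M"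

sublocale pair_in_M \<subseteq> pair_quotient R a b
  using a_in_M b_in_M M_closed by unfold_locales auto

context pair_in_M
begin

lemma pair_eq_M_combination:
  assumes I: "finite I" and \<alpha>: "\<alpha> \<in> I \<rightarrow> carrier R" and \<beta>: "\<beta> \<in> I \<rightarrow> carrier R"
    and c: "c \<in> I \<rightarrow> carrier R"
      "multiple (\<one> \<ominus> (\<Oplus>i\<in>I. c i \<otimes> \<alpha> i)) (\<zero> \<ominus> (\<Oplus>i\<in>I. c i \<otimes> \<beta> i))"
    and d: "d \<in> I \<rightarrow> carrier R"
      "multiple (\<zero> \<ominus> (\<Oplus>i\<in>I. d i \<otimes> \<alpha> i)) (\<one> \<ominus> (\<Oplus>i\<in>I. d i \<otimes> \<beta> i))"
  obtains p where "p \<in> I \<rightarrow> M" "(\<Oplus>i\<in>I. p i \<otimes> \<alpha> i) = a" "(\<Oplus>i\<in>I. p i \<otimes> \<beta> i) = b"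
proof -
  define A1 where "A1 = (\<Oplus>i\<in>I. c i \<otimes> \<alpha> i)"
  define B1 where "B1 = (\<Oplus>i\<in>I. c i \<otimes> \<beta> i)"
  define A2 where "A2 = (\<Oplus>i\<in>I. d i \<otimes> \<alpha> i)"
  define B2 where "B2 = (\<Oplus>i\<in>I. d i \<otimes> \<beta> i)"
  have sums: "A1 \<in> carrier R" "B1 \<in> carrier R" "A2 \<in> carrier R" "B2 \<in> carrier R"
    unfolding A1_def B1_def A2_def B2_def using \<alpha> \<beta> c d by (auto intro!: finsum_closed)
  obtain t1 t2 where t: "t1 \<in> carrier R" "t2 \<in> carrier R"
    and c_eq: "\<one> \<ominus> A1 = t1 \<otimes> a" "\<zero> \<ominus> B1 = t1 \<otimes> b"
    and d_eq: "\<zero> \<ominus> A2 = t2 \<otimes> a" "\<one> \<ominus> B2 = t2 \<otimes> b"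
    using c(2) d(2) unfolding multiple_def A1_def B1_def A2_def B2_def by blast
  define u where "u = \<one> \<ominus> (a \<otimes> t1 \<oplus> b \<otimes> t2)"
  have u: "u \<in> Units R"
    unfolding u_def using t a_in_M b_in_M
    by (intro one_minus_M_Units M.a_closed M_right_mult)
  have combination: "a \<otimes> A1 \<oplus> b \<otimes> A2 = u \<otimes> a" "a \<otimes> B1 \<oplus> b \<otimes> B2 = u \<otimes> b"
    unfolding u_def using lift_combination_identity[OF a_carrier b_carrier t sums c_eq d_eq] .
  define p where "p i = inv u \<otimes> (a \<otimes> c i \<oplus> b \<otimes> d i)" for i
  show thesis
  proof (rule that)
    have "a \<otimes> c i \<oplus> b \<otimes> d i \<in> M" if "i \<in> I" for i
      using that c d a_in_M b_in_M by (auto intro!: M.a_closed M_right_mult)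
    then show "p \<in> I \<rightarrow> M"
      unfolding p_def using u by (auto intro!: M_left_mult)
    have "(\<Oplus>i\<in>I. p i \<otimes> \<alpha> i) = inv u \<otimes> (u \<otimes> a)"
      unfolding p_def combination(1)[symmetric] A1_def A2_def
      using I \<alpha> c d a_carrier b_carrier u by (intro finsum_mult_combination) auto
    then show "(\<Oplus>i\<in>I. p i \<otimes> \<alpha> i) = a"
      using u a_carrier by (simp add: Units_inv_mult_cancel_left)
    have "(\<Oplus>i\<in>I. p i \<otimes> \<beta> i) = inv u \<otimes> (u \<otimes> b)"
      unfolding p_def combination(2)[symmetric] B1_def B2_def
      using I \<beta> c d a_carrier b_carrier u by (intro finsum_mult_combination) auto
    then show "(\<Oplus>i\<in>I. p i \<otimes> \<beta> i) = b"
      using u b_carrier by (simp add: Units_inv_mult_cancel_left)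
  qed
qed

lemma right_multiple_if_independent_M_combination:
  assumes not_product: "a \<notin> M_products"
    and I: "finite I" and \<alpha>: "\<alpha> \<in> I \<rightarrow> carrier R" and \<beta>: "\<beta> \<in> I \<rightarrow> carrier R"
    and p: "p \<in> I \<rightarrow> M" "(\<Oplus>i\<in>I. p i \<otimes> \<alpha> i) = a" "(\<Oplus>i\<in>I. p i \<otimes> \<beta> i) = b"
    and independent: "\<And>i. i \<in> I \<Longrightarrow> multiple (p i \<otimes> \<alpha> i) (p i \<otimes> \<beta> i)"
  shows "\<exists>r\<in>carrier R. b = a \<otimes> r"
proof -
  obtain l where l: "l \<in> I \<rightarrow> carrier R"
    and l_eq: "\<And>i. i \<in> I \<Longrightarrow> p i \<otimes> \<alpha> i = l i \<otimes> a \<and> p i \<otimes> \<beta> i = l i \<otimes> b"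
    using bchoice[of I "\<lambda>i t. t \<in> carrier R \<and> p i \<otimes> \<alpha> i = t \<otimes> a \<and> p i \<otimes> \<beta> i = t \<otimes> b"]
      independent unfolding multiple_def by (metis Pi_I)
  have "(\<Oplus>i\<in>I. p i \<otimes> \<alpha> i) = (\<Oplus>i\<in>I. l i \<otimes> a)"
  proof (rule finsum_cong')
    show "(\<lambda>i. l i \<otimes> a) \<in> I \<rightarrow> carrier R"
      using l a_carrier by auto
  qed (use l_eq in auto)
  then have "(\<Oplus>i\<in>I. l i \<otimes> a) = a"
    using p(2) by simp
  moreover have "\<zero> = \<zero> \<otimes> \<zero>"
    by simp
  then have "a \<noteq> \<zero>"
    using not_product M.zero_closed by blast
  ultimately obtain i where i: "i \<in> I" "l i \<notin> M"
    using exists_coeff_notin_M[OF I l a_carrier] by blast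
  then have l_unit: "l i \<in> Units R"
    using l notin_M_Units by blast
  have pi: "p i \<in> M" "\<alpha> i \<in> carrier R" "\<beta> i \<in> carrier R"
    using i p \<alpha> \<beta> by auto
  define \<nu> where "\<nu> = inv (l i) \<otimes> p i"
  have \<nu>: "\<nu> \<in> M"
    unfolding \<nu>_def using l_unit pi M_left_mult by simp
  have "\<nu> \<otimes> \<gamma> = x" if "p i \<otimes> \<gamma> = l i \<otimes> x" "\<gamma> \<in> carrier R" "x \<in> carrier R" for \<gamma> x
    unfolding \<nu>_def using that l_unit M_closed[OF pi(1)]
    by (simp add: m_assoc Units_inv_mult_cancel_left)
  then have "\<nu> \<otimes> \<alpha> i = a" "\<nu> \<otimes> \<beta> i = b"
    using l_eq[OF i(1)] pi a_carrier b_carrier by auto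
  then show ?thesis
    by (rule right_multiple_if_common_left_factor[OF not_product \<nu> pi(2,3)])
qed

lemma right_multiple_if_quotient_decomposes:
  assumes "direct_sum_of_cyclics R quotient_module"
    and not_product: "a \<notin> M_products"
  shows "\<exists>r\<in>carrier R. b = a \<otimes> r"
proof -
  obtain n :: nat and \<alpha> \<beta> where \<alpha>: "\<alpha> \<in> {..<n} \<rightarrow> carrier R" and \<beta>: "\<beta> \<in> {..<n} \<rightarrow> carrier R"
    and span: "\<And>x y. x \<in> carrier R \<Longrightarrow> y \<in> carrier R \<Longrightarrow> \<exists>c\<in>{..<n} \<rightarrow> carrier R.
        multiple (x \<ominus> (\<Oplus>i\<in>{..<n}. c i \<otimes> \<alpha> i)) (y \<ominus> (\<Oplus>i\<in>{..<n}. c i \<otimes> \<beta> i))"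
    and independent: "\<And>c i. c \<in> {..<n} \<rightarrow> carrier R \<Longrightarrow>
        multiple (\<Oplus>i\<in>{..<n}. c i \<otimes> \<alpha> i) (\<Oplus>i\<in>{..<n}. c i \<otimes> \<beta> i) \<Longrightarrow> i < n \<Longrightarrow>
        multiple (c i \<otimes> \<alpha> i) (c i \<otimes> \<beta> i)"
    by (rule direct_sum_of_cyclics_presentation[OF assms(1)], blast)
  obtain c d where c: "c \<in> {..<n} \<rightarrow> carrier R"
      "multiple (\<one> \<ominus> (\<Oplus>i\<in>{..<n}. c i \<otimes> \<alpha> i)) (\<zero> \<ominus> (\<Oplus>i\<in>{..<n}. c i \<otimes> \<beta> i))"
    and d: "d \<in> {..<n} \<rightarrow> carrier R"
      "multiple (\<zero> \<ominus> (\<Oplus>i\<in>{..<n}. d i \<otimes> \<alpha> i)) (\<one> \<ominus> (\<Oplus>i\<in>{..<n}. d i \<otimes> \<beta> i))"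
    using span[of \<one> \<zero>] span[of \<zero> \<one>] by auto
  obtain p where p: "p \<in> {..<n} \<rightarrow> M"
    "(\<Oplus>i\<in>{..<n}. p i \<otimes> \<alpha> i) = a" "(\<Oplus>i\<in>{..<n}. p i \<otimes> \<beta> i) = b"
    by (rule pair_eq_M_combination[OF finite_lessThan \<alpha> \<beta> c d])
  have p_carrier: "p \<in> {..<n} \<rightarrow> carrier R"
    using p(1) M.a_subset by (auto simp: Pi_iff)
  have "multiple a b"
    unfolding multiple_def using a_carrier b_carrier by (auto intro!: bexI[of _ \<one>])
  then have "multiple (p i \<otimes> \<alpha> i) (p i \<otimes> \<beta> i)" if "i \<in> {..<n}" for i
    using independent[OF p_carrier] p(2,3) that by simp
  then show ?thesis
    by (rule right_multiple_if_independent_M_combination[OF not_product finite_lessThan \<alpha> \<beta> p])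
qed

end

context nilpotent_maximal_left_ideal
begin

lemma M_right_principal:
  assumes decomposes: "\<forall>N :: ('a, 'a \<times> 'a) module.
    left_module R N \<and> generated_by_two R N \<longrightarrow> direct_sum_of_cyclics R N"
  shows "\<exists>a\<in>M. M = {a \<otimes> r | r. r \<in> carrier R}"
proof (cases "M \<subseteq> M_products")
  case True
  then have "M = {\<zero>}"
    by (rule M_eq_zero_if_products)
  moreover have "{\<zero> \<otimes> r | r. r \<in> carrier R} = {\<zero>}"
    by force
  ultimately show ?thesis
    by blast
next
  case False
  then obtain a where a_M: "a \<in> M" and a_not_product: "a \<notin> M_products"
    by blast
  have "b \<in> {a \<otimes> r | r. r \<in> carrier R}" if b_M: "b \<in> M" for b
  proof -
    interpret pair_in_M R M k a b
      using a_M b_M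
      by (intro pair_in_M.intro pair_in_M_axioms.intro nilpotent_maximal_left_ideal_axioms)
    have "direct_sum_of_cyclics R quotient_module"
      using decomposes quotient_left_module quotient_generated_by_two by blast
    then show ?thesis
      using right_multiple_if_quotient_decomposes a_not_product by blast
  qed
  moreover have "{a \<otimes> r | r. r \<in> carrier R} \<subseteq> M"
    using M_right_mult a_M by blast
  ultimately show ?thesis
    using a_M by blast
qed

end

theorem theorem2p6:
  fixes R :: "'a ring" and \<M> :: "'a set" and k :: nat
  assumes "ring R"
    and "local_ring R"
    and "maximal_left_ideal R \<M>"
    and "fg_left_ideal R \<M>"
    and "fg_right_ideal R \<M>"
    and "ideal_power_zero R \<M> k"
    and "\<forall>M :: ('a, 'a \<times> 'a) module.
           left_module R M \<and> generated_by_two R M \<longrightarrow> direct_sum_of_cyclics R M"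
  shows "(left_artinian R \<and> principal_left_ideal_ring R) \<or>
         (right_artinian R \<and> principal_right_ideal_ring R)"
proof -
  interpret nilpotent_maximal_left_ideal R \<M> k
    using assms(1,3,6)
    by (intro nilpotent_maximal_left_ideal.intro nilpotent_maximal_left_ideal_axioms.intro)
  obtain a where "a \<in> \<M>" "\<M> = {a \<otimes>\<^bsub>R\<^esub> r | r. r \<in> carrier R}"
    using M_right_principal[OF assms(7)] by blast
  then have "right_artinian R \<and> principal_right_ideal_ring R"
    by (rule right_artinian_principal_if_M_right_principal)
  then show ?thesis
    by blast
qed

end
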